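(* Let $C$ be a hereditary pointed coalgebra with Gabriel quiver $Q$. The following are equivalent: (1) $C$ is left f-qcF; (2) $C$ is right f-qcF; (3) $C$ is left qcF; (4) $C$ is right qcF; (5) $C$ is coFrobenius; (6) $C$ is cosemisimple; (7) $Q$ is discrete (has no arrows).
   Context: $\Bbbk$ is a field; all coalgebras are over $\Bbbk$. A coalgebra is pointed if all its simple subcoalgebras are one dimensional, and hereditary if homomorphic images of injective right (equivalently left) comodules are injective. The path coalgebra $\Bbbk Q$ of a quiver $Q$ has basis all paths of $Q$ (including trivial paths = vertices), with $\Delta(p)=\sum_{xy=p}x\otimes y$ ($xy$ = concatenation) and $\varepsilon(p)=1$ if $p$ is trivial and $0$ otherwise. It is known that every pointed hereditary coalgebra $C$ is isomorphic to $\Bbbk Q$ for a unique quiver $Q$, called the Gabriel quiver of $C$. The dual algebra $C^*$ has product $(fg)(x)=\sum f(x_1)g(x_2)$; right $C$-comodules (coaction $m\mapsto \sum m_0\otimes m_1$) are left $C^*$-modules via $f\rightharpoonup m=\sum m_0 f(m_1)$, and left $C$-comodules (coaction $m\mapsto\sum m_{-1}\otimes m_0$) are right $C^*$-modules via $m\leftharpoonup f=\sum f(m_{-1})m_0$; in particular $C$ is a left and a right $C^*$-module. $C$ is left (right) qcF if $C$ embeds as a left (right) $C^*$-module in a free left (right) $C^*$-module. $C$ is left f-qcF if every finite dimensional right $C$-comodule embeds as a left $C^*$-module in a free left $C^*$-module; right f-qcF if every finite dimensional left $C$-comodule embeds as a right $C^*$-module in a free right $C^*$-module. $C$ is coFrobenius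 if $C$ embeds in $C^*$ as a left $C^*$-module (equivalently, as a right $C^*$-module). $C$ is cosemisimple if it is a direct sum of simple subcoalgebras. *)

theory Defs
  imports Main
begin

text \<open>A coalgebra over the field 'k is presented by a basis set B (cbasis) of
an index type 'b, the structure constants of the comultiplication
(comul b (p,q) = coefficient of p \<otimes> q in Delta(b)) and the values of
the counit on the basis.  Elements of C are finitely supported
functions 'b => 'k supported in B; elements of the dual algebra C* are
arbitrary functions on B (extended by 0 outside B).\<close>

record ('b, 'k) coalg =
  cbasis :: "'b set"
  comul  :: "'b \<Rightarrow> 'b \<times> 'b \<Rightarrow> 'k"
  counit :: "'b \<Rightarrow> 'k"

definition csupp :: "('a \<Rightarrow> 'k::zero) \<Rightarrow> 'a set" where
  "csupp f = {x. f x \<noteq> 0}"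

definition celems :: "('b, 'k::zero) coalg \<Rightarrow> ('b \<Rightarrow> 'k) set" where
  "celems C = {x. finite (csupp x) \<and> csupp x \<subseteq> cbasis C}"

definition lin_ext :: "('b \<Rightarrow> 'z \<Rightarrow> 'k::comm_semiring_1) \<Rightarrow> ('b \<Rightarrow> 'k) \<Rightarrow> 'z \<Rightarrow> 'k" where
  "lin_ext \<phi> x = (\<lambda>z. \<Sum>b\<in>csupp x. x b * \<phi> b z)"

definition dual_elems :: "('b, 'k::zero) coalg \<Rightarrow> ('b \<Rightarrow> 'k) set" where
  "dual_elems C = {f. \<forall>b. b \<notin> cbasis C \<longrightarrow> f b = 0}"

text \<open>Product of C*: (fg)(x) = sum f(x1) g(x2).\<close>
definition dual_mult :: "('b, 'k::comm_semiring_1) coalg \<Rightarrow> ('b \<Rightarrow> 'k) \<Rightarrow> ('b \<Rightarrow> 'k) \<Rightarrow> 'b \<Rightarrow> 'k" where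
  "dual_mult C f g = (\<lambda>b. if b \<in> cbasis C
      then \<Sum>pq\<in>csupp (comul C b). comul C b pq * f (fst pq) * g (snd pq) else 0)"

text \<open>Left C*-action on C: f -> b = sum b1 f(b2).\<close>
definition lhit :: "('b, 'k::comm_semiring_1) coalg \<Rightarrow> ('b \<Rightarrow> 'k) \<Rightarrow> 'b \<Rightarrow> 'b \<Rightarrow> 'k" where
  "lhit C f b = (\<lambda>p. \<Sum>q\<in>{q. comul C b (p, q) \<noteq> 0}. comul C b (p, q) * f q)"

text \<open>Right C*-action on C: b <- f = sum f(b1) b2.\<close>
definition rhit :: "('b, 'k::comm_semiring_1) coalg \<Rightarrow> 'b \<Rightarrow> ('b \<Rightarrow> 'k) \<Rightarrow> 'b \<Rightarrow> 'k" where
  "rhit C b f = (\<lambda>q. \<Sum>p\<in>{p. comul C b (p, q) \<noteq> 0}. f p * comul C b (p, q))"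

text \<open>The free C*-module C*^(I): an element u is encoded as u (i,b) = (i-th component)(b).\<close>
definition free_mod :: "('b, 'k::zero) coalg \<Rightarrow> 'i set \<Rightarrow> ('i \<times> 'b \<Rightarrow> 'k) set" where
  "free_mod C I = {u. finite {i. \<exists>b. u (i, b) \<noteq> 0} \<and>
                      (\<forall>i b. u (i, b) \<noteq> 0 \<longrightarrow> i \<in> I \<and> b \<in> cbasis C)}"

definition free_lact :: "('b, 'k::comm_semiring_1) coalg \<Rightarrow> ('b \<Rightarrow> 'k) \<Rightarrow> ('i \<times> 'b \<Rightarrow> 'k) \<Rightarrow> 'i \<times> 'b \<Rightarrow> 'k" where
  "free_lact C f u = (\<lambda>(i, b). dual_mult C f (\<lambda>c. u (i, c)) b)"

definition free_ract :: "('b, 'k::comm_semiring_1) coalg \<Rightarrow> ('i \<times> 'b \<Rightarrow> 'k) \<Rightarrow> ('b \<Rightarrow> 'k) \<Rightarrow> 'i \<times> 'b \<Rightarrow> 'k" where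
  "free_ract C u f = (\<lambda>(i, b). dual_mult C (\<lambda>c. u (i, c)) f b)"

text \<open>Since C has
basis B, the image of any C*-linear map into a free module lies in a free
submodule of rank at most |B| * aleph_0, so index sets I of type ('b * nat) set suffice.\<close>
definition left_qcF :: "('b, 'k::field) coalg \<Rightarrow> bool" where
  "left_qcF C \<longleftrightarrow> (\<exists>(I :: ('b \<times> nat) set) (\<phi> :: 'b \<Rightarrow> ('b \<times> nat) \<times> 'b \<Rightarrow> 'k).
      (\<forall>b\<in>cbasis C. \<phi> b \<in> free_mod C I) \<and>
      (\<forall>x\<in>celems C. lin_ext \<phi> x = (\<lambda>_. 0) \<longrightarrow> x = (\<lambda>_. 0)) \<and>
      (\<forall>f\<in>dual_elems C. \<forall>b\<in>cbasis C. lin_ext \<phi> (lhit C f b) = free_lact C f (\<phi> b)))"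

definition right_qcF :: "('b, 'k::field) coalg \<Rightarrow> bool" where
  "right_qcF C \<longleftrightarrow> (\<exists>(I :: ('b \<times> nat) set) (\<phi> :: 'b \<Rightarrow> ('b \<times> nat) \<times> 'b \<Rightarrow> 'k).
      (\<forall>b\<in>cbasis C. \<phi> b \<in> free_mod C I) \<and>
      (\<forall>x\<in>celems C. lin_ext \<phi> x = (\<lambda>_. 0) \<longrightarrow> x = (\<lambda>_. 0)) \<and>
      (\<forall>f\<in>dual_elems C. \<forall>b\<in>cbasis C. lin_ext \<phi> (rhit C b f) = free_ract C (\<phi> b) f))"

definition coFrobenius :: "('b, 'k::field) coalg \<Rightarrow> bool" where
  "coFrobenius C \<longleftrightarrow> (\<exists>\<phi> :: 'b \<Rightarrow> 'b \<Rightarrow> 'k.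
      (\<forall>b\<in>cbasis C. \<phi> b \<in> dual_elems C) \<and>
      (\<forall>x\<in>celems C. lin_ext \<phi> x = (\<lambda>_. 0) \<longrightarrow> x = (\<lambda>_. 0)) \<and>
      (\<forall>f\<in>dual_elems C. \<forall>b\<in>cbasis C. lin_ext \<phi> (lhit C f b) = dual_mult C f (\<phi> b)))"

text \<open>A finite dimensional right C-comodule with basis m_0..m_(n-1):
rho(m_a) = sum_(m,c) r a m c * m_m (x) c.\<close>
definition right_comod :: "('b, 'k::field) coalg \<Rightarrow> nat \<Rightarrow> (nat \<Rightarrow> nat \<Rightarrow> 'b \<Rightarrow> 'k) \<Rightarrow> bool" where
  "right_comod C n r \<longleftrightarrow>
     (\<forall>a m c. r a m c \<noteq> 0 \<longrightarrow> a < n \<and> m < n \<and> c \<in> cbasis C) \<and>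
     (\<forall>a m. finite {c. r a m c \<noteq> 0}) \<and>
     (\<forall>a<n. \<forall>m<n. \<forall>p q. (\<Sum>m'<n. r a m' q * r m' m p)
                      = (\<Sum>c\<in>{c. r a m c \<noteq> 0}. r a m c * comul C c (p, q))) \<and>
     (\<forall>a<n. \<forall>m<n. (\<Sum>c\<in>{c. r a m c \<noteq> 0}. r a m c * counit C c) = (if a = m then 1 else 0))"

text \<open>A finite dimensional left C-comodule with basis m_0..m_(n-1):
lambda(m_a) = sum_(m,c) r a m c * c (x) m_m.\<close>
definition left_comod :: "('b, 'k::field) coalg \<Rightarrow> nat \<Rightarrow> (nat \<Rightarrow> nat \<Rightarrow> 'b \<Rightarrow> 'k) \<Rightarrow> bool" where
  "left_comod C n r \<longleftrightarrow>
     (\<forall>a m c. r a m c \<noteq> 0 \<longrightarrow> a < n \<and> m < n \<and> c \<in> cbasis C) \<and>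
     (\<forall>a m. finite {c. r a m c \<noteq> 0}) \<and>
     (\<forall>a<n. \<forall>m<n. \<forall>p q. (\<Sum>c\<in>{c. r a m c \<noteq> 0}. r a m c * comul C c (p, q))
                      = (\<Sum>m'<n. r a m' p * r m' m q)) \<and>
     (\<forall>a<n. \<forall>m<n. (\<Sum>c\<in>{c. r a m c \<noteq> 0}. counit C c * r a m c) = (if a = m then 1 else 0))"

text \<open>Coordinates of f -> m_a = sum (m_a)_0 f((m_a)_1) (right comodule), resp.
of m_a <- f = sum f((m_a)_(-1)) (m_a)_0 (left comodule).\<close>
definition comod_act :: "(nat \<Rightarrow> nat \<Rightarrow> 'b \<Rightarrow> 'k::comm_semiring_1) \<Rightarrow> ('b \<Rightarrow> 'k) \<Rightarrow> nat \<Rightarrow> nat \<Rightarrow> 'k" where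
  "comod_act r f a = (\<lambda>m. \<Sum>c\<in>{c. r a m c \<noteq> 0}. r a m c * f c)"

text \<open>Free modules of rank at most aleph_0 suffice for finite dimensional modules.\<close>
definition left_fqcF :: "('b, 'k::field) coalg \<Rightarrow> bool" where
  "left_fqcF C \<longleftrightarrow> (\<forall>n r. right_comod C n r \<longrightarrow>
     (\<exists>(I :: nat set) (\<phi> :: nat \<Rightarrow> nat \<times> 'b \<Rightarrow> 'k).
        (\<forall>a<n. \<phi> a \<in> free_mod C I) \<and>
        (\<forall>x :: nat \<Rightarrow> 'k. (\<forall>m. x m \<noteq> 0 \<longrightarrow> m < n) \<longrightarrow>
              (\<lambda>z. \<Sum>a<n. x a * \<phi> a z) = (\<lambda>_. 0) \<longrightarrow> x = (\<lambda>_. 0)) \<and>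
        (\<forall>f\<in>dual_elems C. \<forall>a<n.
              (\<lambda>z. \<Sum>m<n. comod_act r f a m * \<phi> m z) = free_lact C f (\<phi> a))))"

definition right_fqcF :: "('b, 'k::field) coalg \<Rightarrow> bool" where
  "right_fqcF C \<longleftrightarrow> (\<forall>n r. left_comod C n r \<longrightarrow>
     (\<exists>(I :: nat set) (\<phi> :: nat \<Rightarrow> nat \<times> 'b \<Rightarrow> 'k).
        (\<forall>a<n. \<phi> a \<in> free_mod C I) \<and>
        (\<forall>x :: nat \<Rightarrow> 'k. (\<forall>m. x m \<noteq> 0 \<longrightarrow> m < n) \<longrightarrow>
              (\<lambda>z. \<Sum>a<n. x a * \<phi> a z) = (\<lambda>_. 0) \<longrightarrow> x = (\<lambda>_. 0)) \<and>
        (\<forall>f\<in>dual_elems C. \<forall>a<n.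
              (\<lambda>z. \<Sum>m<n. comod_act r f a m * \<phi> m z) = free_ract C (\<phi> a) f)))"

definition fspan :: "('a \<Rightarrow> 'k::comm_semiring_1) set \<Rightarrow> ('a \<Rightarrow> 'k) set" where
  "fspan S = {x. \<exists>F c. finite F \<and> F \<subseteq> S \<and> x = (\<lambda>z. \<Sum>v\<in>F. c v * v z)}"

definition tensor_sq :: "('a \<Rightarrow> 'k::comm_semiring_1) set \<Rightarrow> ('a \<times> 'a \<Rightarrow> 'k) set" where
  "tensor_sq D = fspan {(\<lambda>(p, q). x p * y q) | x y. x \<in> D \<and> y \<in> D}"

definition subcoalgebra :: "('b, 'k::field) coalg \<Rightarrow> ('b \<Rightarrow> 'k) set \<Rightarrow> bool" where
  "subcoalgebra C D \<longleftrightarrow> D \<subseteq> celems C \<and> fspan D = D \<and>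
      (\<forall>x\<in>D. lin_ext (comul C) x \<in> tensor_sq D)"

definition simple_subcoalgebra :: "('b, 'k::field) coalg \<Rightarrow> ('b \<Rightarrow> 'k) set \<Rightarrow> bool" where
  "simple_subcoalgebra C D \<longleftrightarrow> subcoalgebra C D \<and> D \<noteq> {\<lambda>_. 0} \<and>
      (\<forall>E. subcoalgebra C E \<and> E \<subseteq> D \<longrightarrow> E = {\<lambda>_. 0} \<or> E = D)"

definition cosemisimple :: "('b, 'k::field) coalg \<Rightarrow> bool" where
  "cosemisimple C \<longleftrightarrow> (\<exists>\<D>. (\<forall>D\<in>\<D>. simple_subcoalgebra C D) \<and>
      fspan (\<Union>\<D>) = celems C \<and>
      (\<forall>D\<in>\<D>. D \<inter> fspan (\<Union>(\<D> - {D})) = {\<lambda>_. 0}))"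

text \<open>A quiver Q = (V, E, s, t); a path is (v, [a1,...,an]) with v its start
vertex; n = 0 gives the trivial path at v.\<close>
definition quiver :: "'v set \<Rightarrow> 'e set \<Rightarrow> ('e \<Rightarrow> 'v) \<Rightarrow> ('e \<Rightarrow> 'v) \<Rightarrow> bool" where
  "quiver V E s t \<longleftrightarrow> (\<forall>e\<in>E. s e \<in> V \<and> t e \<in> V)"

definition is_path :: "'v set \<Rightarrow> 'e set \<Rightarrow> ('e \<Rightarrow> 'v) \<Rightarrow> ('e \<Rightarrow> 'v) \<Rightarrow> 'v \<times> 'e list \<Rightarrow> bool" where
  "is_path V E s t p \<longleftrightarrow> fst p \<in> V \<and> set (snd p) \<subseteq> E \<and>
      (snd p \<noteq> [] \<longrightarrow> s (hd (snd p)) = fst p) \<and>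
      (\<forall>i. Suc i < length (snd p) \<longrightarrow> t (snd p ! i) = s (snd p ! Suc i))"

definition path_end :: "('e \<Rightarrow> 'v) \<Rightarrow> 'v \<times> 'e list \<Rightarrow> 'v" where
  "path_end t p = (if snd p = [] then fst p else t (last (snd p)))"

text \<open>Path coalgebra kQ: Delta(p) = sum_(xy = p) x (x) y, eps(p) = [p trivial].\<close>
definition path_coalg :: "'v set \<Rightarrow> 'e set \<Rightarrow> ('e \<Rightarrow> 'v) \<Rightarrow> ('e \<Rightarrow> 'v) \<Rightarrow> ('v \<times> 'e list, 'k::field) coalg" where
  "path_coalg V E s t =
     \<lparr> cbasis = {p. is_path V E s t p},
       comul = (\<lambda>p xy. if is_path V E s t (fst xy) \<and> is_path V E s t (snd xy) \<and>
                           fst (snd xy) = path_end t (fst xy) \<and>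
                           (fst (fst xy), snd (fst xy) @ snd (snd xy)) = p then 1 else 0),
       counit = (\<lambda>p. if is_path V E s t p \<and> snd p = [] then 1 else 0) \<rparr>"

end

theory Submission
  imports Defs
begin

text \<open>Suppose \<open>Q\<close> has an arrow \<open>e\<close>. An element \<open>g\<close> of \<open>C*\<close> on which \<open>C*\<close> acts through the
  vertex character of \<open>t e\<close> must vanish: \<open>\<delta>\<^bsub>t e\<^esub>\<close> concentrates \<open>g\<close> on paths \<open>q\<close> starting at
  \<open>t e\<close>, while \<open>(\<delta>\<^bsub>e\<^esub> g)(e q) = g(q)\<close> and \<open>\<delta>\<^bsub>e\<^esub>\<close> acts by the scalar \<open>\<delta>\<^bsub>e\<^esub>(t e) = 0\<close>.
  Hence the one-dimensional comodule of the vertex \<open>t e\<close> (a subcomodule of \<open>C\<close>) admits no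
  nonzero \<open>C*\<close>-linear map into \<open>C*\<close> or into a free \<open>C*\<close>-module, which rules out all the (f-)qcF
  and coFrobenius properties (on the right, symmetrically with \<open>s e\<close>). Moreover every simple
  subcoalgebra of \<open>C\<close> is the line of a vertex (slice \<open>\<Delta>\<close> of any of its elements at a longest
  path of its support), so their span misses the arrows and \<open>C\<close> is not cosemisimple.
  If \<open>Q\<close> has no arrows, the vertices are grouplike, \<open>C*\<close> acts pointwise, \<open>C\<close> is the direct
  sum of the vertex lines, and every comodule embeds into a free module through its coaction.\<close>

section \<open>Finitely supported functions and spans\<close>

abbreviation delta :: "'b \<Rightarrow> 'b \<Rightarrow> 'k::zero_neq_one" where
  "delta b \<equiv> \<lambda>p. if p = b then 1 else 0"

lemma sum_eq_single:
  assumes "finite S" and "\<And>x. x \<in> S \<Longrightarrow> x \<noteq> a \<Longrightarrow> h x = 0"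
  shows "sum h S = (if a \<in> S then h a else 0)"
  using assms by (auto simp: sum.remove intro!: sum.neutral)

lemma lin_ext_delta:
  "lin_ext \<phi> (\<lambda>p. if p = b then k else 0) = (\<lambda>z. k * \<phi> b z)"
proof (cases "k = 0")
  case True
  then show ?thesis by (simp add: lin_ext_def csupp_def)
next
  case False
  then have "csupp (\<lambda>p. if p = b then k else 0) = {b}" by (auto simp: csupp_def)
  then show ?thesis by (simp add: lin_ext_def)
qed

lemma lin_ext_delta_id:
  assumes "finite (csupp x)"
  shows "lin_ext delta x = (x :: _ \<Rightarrow> 'k::comm_semiring_1)"
proof
  fix z
  have "lin_ext delta x z = (\<Sum>b\<in>csupp x. x b * delta b z)"
    by (simp add: lin_ext_def)
  also have "\<dots> = x z"
    using assms by (subst sum_eq_single[where a = z]) (auto simp: csupp_def)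
  finally show "lin_ext delta x z = x z" .
qed

lemma delta_in_celems:
  "b \<in> cbasis C \<Longrightarrow> delta b \<in> celems (C :: ('b, 'k::zero_neq_one) coalg)"
  by (auto simp: celems_def csupp_def)

lemma delta_ne_zero: "(delta b :: _ \<Rightarrow> 'k::zero_neq_one) \<noteq> (\<lambda>_. 0)"
  by (metis zero_neq_one)

lemma lin_ext_inj_basis_ne_zero:
  assumes inj: "\<forall>x\<in>celems C. lin_ext \<phi> x = (\<lambda>_. 0) \<longrightarrow> x = (\<lambda>_. 0)"
    and b: "b \<in> cbasis C"
  shows "\<phi> b \<noteq> (\<lambda>_. (0 :: 'k::comm_semiring_1))"
proof
  assume "\<phi> b = (\<lambda>_. 0)"
  then have "lin_ext \<phi> (delta b) = (\<lambda>_. 0)" by (simp add: lin_ext_delta)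
  with inj delta_in_celems[OF b] have "(delta b :: _ \<Rightarrow> 'k) = (\<lambda>_. 0)" by blast
  then show False by (rule delta_ne_zero[THEN notE])
qed

lemma lincomb_in_fspan:
  assumes fin: "finite F" and h: "\<forall>w\<in>F. h w \<in> D"
  shows "(\<lambda>a. \<Sum>w\<in>F. d w * h w a) \<in> fspan D"
proof -
  let ?c = "\<lambda>u. \<Sum>w\<in>{w\<in>F. h w = u}. d w"
  have "(\<Sum>w\<in>F. d w * h w a) = (\<Sum>u\<in>h ` F. ?c u * u a)" for a
  proof -
    have "(\<Sum>w\<in>F. d w * h w a) = (\<Sum>u\<in>h ` F. \<Sum>w\<in>{w\<in>F. h w = u}. d w * h w a)"
      using fin by (rule sum.image_gen)
    also have "\<dots> = (\<Sum>u\<in>h ` F. ?c u * u a)"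
      by (intro sum.cong refl) (auto simp: sum_distrib_right intro!: sum.cong)
    finally show ?thesis .
  qed
  then show ?thesis
    unfolding fspan_def using fin h by (auto intro!: exI[of _ "h ` F"] exI[of _ ?c])
qed

lemma lincomb_in_span_closed:
  "finite F \<Longrightarrow> \<forall>w\<in>F. h w \<in> D \<Longrightarrow> fspan D = D \<Longrightarrow> (\<lambda>a. \<Sum>w\<in>F. d w * h w a) \<in> D"
  using lincomb_in_fspan by blast

lemma zero_in_span_closed: "fspan D = D \<Longrightarrow> (\<lambda>_. 0) \<in> D"
  using lincomb_in_span_closed[of "{}"] by simp

lemma csupp_lincomb:
  fixes c :: "('b \<Rightarrow> 'k) \<Rightarrow> 'k::comm_semiring_1"
  shows "csupp (\<lambda>z. \<Sum>u\<in>F. c u * u z) \<subseteq> (\<Union>u\<in>F. csupp u)"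
proof
  fix z assume "z \<in> csupp (\<lambda>z. \<Sum>u\<in>F. c u * u z)"
  then obtain u where "u \<in> F" "c u * u z \<noteq> 0"
    unfolding csupp_def by (auto dest: sum.not_neutral_contains_not_neutral)
  then show "z \<in> (\<Union>u\<in>F. csupp u)"
    unfolding csupp_def by (metis (mono_tags) UN_I mem_Collect_eq mult_zero_right)
qed

lemma tensor_sq_slice:
  assumes D: "fspan D = D" and T: "T \<in> tensor_sq D"
  shows "(\<lambda>a. T (a, P)) \<in> D"
proof -
  obtain F c where F: "finite F" "F \<subseteq> {(\<lambda>(p, q). x p * y q) | x y. x \<in> D \<and> y \<in> D}"
    and T_eq: "T = (\<lambda>z. \<Sum>v\<in>F. c v * v z)"
    using T unfolding tensor_sq_def fspan_def by blast
  have "\<forall>w\<in>F. \<exists>xy. fst xy \<in> D \<and> snd xy \<in> D \<and> w = (\<lambda>(p, q). fst xy p * snd xy q)"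
    using F(2) by force
  then obtain xy where xy: "\<forall>w\<in>F. fst (xy w) \<in> D \<and> snd (xy w) \<in> D \<and> w = (\<lambda>(p, q). fst (xy w) p * snd (xy w) q)"
    by metis
  have "T (a, P) = (\<Sum>w\<in>F. (c w * snd (xy w) P) * fst (xy w) a)" for a
    unfolding T_eq
  proof (rule sum.cong[OF refl])
    fix w assume "w \<in> F"
    then have "w (a, P) = fst (xy w) a * snd (xy w) P" using xy by (metis case_prod_conv)
    then show "c w * w (a, P) = (c w * snd (xy w) P) * fst (xy w) a" by (simp add: ac_simps)
  qed
  then have "(\<lambda>a. T (a, P)) = (\<lambda>a. \<Sum>w\<in>F. (c w * snd (xy w) P) * fst (xy w) a)" by simp
  also have "\<dots> \<in> D"
    using F(1) xy D by (intro lincomb_in_span_closed) auto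
  finally show ?thesis .
qed

lemma fspan_subset_celems:
  assumes "D \<subseteq> celems (C :: ('b, 'k::field) coalg)"
  shows "fspan D \<subseteq> celems C"
proof
  fix x assume "x \<in> fspan D"
  then obtain F c where F: "finite F" "F \<subseteq> D" and x: "x = (\<lambda>z. \<Sum>u\<in>F. c u * u z)"
    unfolding fspan_def by blast
  have "csupp x \<subseteq> (\<Union>u\<in>F. csupp u)" unfolding x by (rule csupp_lincomb)
  moreover have "finite (\<Union>u\<in>F. csupp u)" "(\<Union>u\<in>F. csupp u) \<subseteq> cbasis C"
    using F assms by (auto simp: celems_def)
  ultimately show "x \<in> celems C" by (auto simp: celems_def intro: finite_subset)
qed

lemma sum_restrict_swap:
  fixes R :: "nat \<Rightarrow> 'b \<Rightarrow> 'k::comm_semiring_1"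
  assumes S: "finite S" and sub: "\<forall>m<n. {c. R m c \<noteq> 0} \<subseteq> S"
  shows "(\<Sum>m<n. (\<Sum>c\<in>{c. R m c \<noteq> 0}. R m c * f c) * g m) = (\<Sum>c\<in>S. f c * (\<Sum>m<n. R m c * g m))"
proof -
  have "(\<Sum>m<n. (\<Sum>c\<in>{c. R m c \<noteq> 0}. R m c * f c) * g m) = (\<Sum>m<n. (\<Sum>c\<in>S. R m c * f c) * g m)"
    using sub by (intro sum.cong refl arg_cong2[where f = "(*)"] sum.mono_neutral_left[OF S]) auto
  also have "\<dots> = (\<Sum>m<n. \<Sum>c\<in>S. f c * (R m c * g m))"
    by (simp only: sum_distrib_right) (simp add: mult_ac)
  also have "\<dots> = (\<Sum>c\<in>S. \<Sum>m<n. f c * (R m c * g m))" by (rule sum.swap)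
  also have "\<dots> = (\<Sum>c\<in>S. f c * (\<Sum>m<n. R m c * g m))" by (simp add: sum_distrib_left)
  finally show ?thesis .
qed

lemma lin_ext_component:
  fixes x :: "'b \<Rightarrow> 'k::comm_semiring_1" and i0 :: 'i
  assumes "finite (csupp x)"
  shows "lin_ext (\<lambda>b (i, z). if i = i0 \<and> z = b then 1 else 0) x = (\<lambda>(i, z). if i = i0 then x z else 0)"
proof
  fix iz :: "'i \<times> 'b"
  obtain i z where iz: "iz = (i, z)" by (cases iz)
  have "lin_ext (\<lambda>b (i, z). if i = i0 \<and> z = b then 1 else 0) x (i, z)
      = (\<Sum>b\<in>csupp x. x b * (if i = i0 \<and> z = b then 1 else 0))"
    by (simp add: lin_ext_def)
  also have "\<dots> = (if z \<in> csupp x then x z * (if i = i0 \<and> z = z then 1 else 0) else 0)"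
    by (rule sum_eq_single[OF assms]) auto
  also have "\<dots> = (if i = i0 then x z else 0)" by (auto simp: csupp_def)
  finally show "lin_ext (\<lambda>b (i, z). if i = i0 \<and> z = b then 1 else 0) x iz
      = (case iz of (i, z) \<Rightarrow> if i = i0 then x z else 0)"
    by (simp add: iz)
qed

lemma lin_ext_component_inj:
  fixes x :: "'b \<Rightarrow> 'k::comm_semiring_1" and i0 :: 'i
  assumes "finite (csupp x)" and "lin_ext (\<lambda>b (i, z). if i = i0 \<and> z = b then 1 else 0) x = (\<lambda>_. 0)"
  shows "x = (\<lambda>_. 0)"
proof
  fix z
  have "(\<lambda>(i, z). if i = i0 then x z else 0) = (\<lambda>_. 0)"
    using assms lin_ext_component[OF assms(1), of i0] by simp
  from fun_cong[OF this, of "(i0, z)"] show "x z = 0" by simp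
qed

lemma component_in_free_mod:
  fixes C :: "('b, 'k::field) coalg" and i0 :: 'i
  assumes "b \<in> cbasis C"
  shows "(\<lambda>(i, z). if i = i0 \<and> z = b then 1 else 0) \<in> free_mod C UNIV"
proof -
  have "{i. \<exists>z. (case (i, z) of (i, z) \<Rightarrow> if i = i0 \<and> z = b then 1 else 0) \<noteq> (0::'k)} \<subseteq> {i0}" by auto
  then have "finite {i. \<exists>z. (case (i, z) of (i, z) \<Rightarrow> if i = i0 \<and> z = b then 1 else 0) \<noteq> (0::'k)}"
    by (rule finite_subset) simp
  then show ?thesis using assms by (auto simp: free_mod_def split: if_splits)
qed

lemma dual_mult_outside_basis: "y \<notin> cbasis C \<Longrightarrow> dual_mult C f g y = 0"
  by (simp add: dual_mult_def)

lemma delta_in_dual_elems: "b \<in> cbasis C \<Longrightarrow> delta b \<in> dual_elems (C :: ('b, 'k::zero_neq_one) coalg)"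
  by (auto simp: dual_elems_def)

section \<open>Path coalgebras\<close>

lemma cbasis_path_coalg [simp]: "cbasis (path_coalg V E s t) = {p. is_path V E s t p}"
  by (simp add: path_coalg_def)

lemma counit_path_coalg [simp]:
  "counit (path_coalg V E s t) p = (if is_path V E s t p \<and> snd p = [] then 1 else 0)"
  by (simp add: path_coalg_def)

lemma comul_path_coalg:
  "comul (path_coalg V E s t) y pq =
    (if is_path V E s t (fst pq) \<and> is_path V E s t (snd pq) \<and> fst (snd pq) = path_end t (fst pq) \<and>
        (fst (fst pq), snd (fst pq) @ snd (snd pq)) = y then 1 else 0)"
  by (simp add: path_coalg_def)

lemma is_path_trivial [simp]: "is_path V E s t (v, []) \<longleftrightarrow> v \<in> V"
  by (simp add: is_path_def)

lemma path_end_trivial [simp]: "path_end t (v, []) = v"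
  by (simp add: path_end_def)

lemma path_end_in_vertices: "quiver V E s t \<Longrightarrow> is_path V E s t p \<Longrightarrow> path_end t p \<in> V"
  by (auto simp: path_end_def is_path_def quiver_def dest!: last_in_set)

lemma is_path_arrow: "quiver V E s t \<Longrightarrow> e \<in> E \<Longrightarrow> is_path V E s t (s e, [e])"
  by (auto simp: is_path_def quiver_def)

lemma is_path_Cons_arrow:
  assumes "quiver V E s t" and "e \<in> E" and q: "is_path V E s t q" and "fst q = t e"
  shows "is_path V E s t (s e, e # snd q)"
proof -
  have "t ((e # snd q) ! i) = s ((e # snd q) ! Suc i)" if "Suc i < length (e # snd q)" for i
    using that q assms(4) by (cases i) (auto simp: is_path_def hd_conv_nth)
  then show ?thesis using assms by (auto simp: is_path_def quiver_def)
qed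

lemma is_path_snoc_arrow:
  assumes "quiver V E s t" and "e \<in> E" and p: "is_path V E s t p" and pe: "path_end t p = s e"
  shows "is_path V E s t (fst p, snd p @ [e])"
proof -
  have "t ((snd p @ [e]) ! i) = s ((snd p @ [e]) ! Suc i)" if i: "Suc i < length (snd p @ [e])" for i
  proof (cases "Suc i < length (snd p)")
    case True
    then show ?thesis using p by (auto simp: is_path_def nth_append)
  next
    case False
    with i have "Suc i = length (snd p)" by simp
    moreover from this have "last (snd p) = snd p ! i"
      by (metis diff_Suc_1 last_conv_nth list.size(3) nat.distinct(1))
    ultimately show ?thesis using pe by (auto simp: nth_append path_end_def split: if_splits)
  qed
  moreover have "snd p = [] \<Longrightarrow> s e = fst p" using pe by (simp add: path_end_def)
  ultimately show ?thesis using assms by (cases "snd p") (auto simp: is_path_def quiver_def)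
qed

lemma comul_path_coalg_ne_zero:
  assumes "comul (path_coalg V E s t) y (p, q) \<noteq> (0::'k::field)"
  shows "q = (path_end t p, drop (length (snd p)) (snd y))"
    and "p = (fst y, take (length (snd y) - length (snd q)) (snd y))"
proof -
  from assms have "fst q = path_end t p" "fst p = fst y" and app: "snd y = snd p @ snd q"
    by (auto simp: comul_path_coalg split: if_splits)
  then show "q = (path_end t p, drop (length (snd p)) (snd y))"
    and "p = (fst y, take (length (snd y) - length (snd q)) (snd y))"
    by (simp_all add: app prod_eq_iff)
qed

lemma finite_csupp_comul_path_coalg: "finite (csupp (comul (path_coalg V E s t) y :: _ \<Rightarrow> 'k::field))"
proof -
  let ?split = "\<lambda>k. ((fst y, take k (snd y)), (path_end t (fst y, take k (snd y)), drop k (snd y)))"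
  have "csupp (comul (path_coalg V E s t) y :: _ \<Rightarrow> 'k) \<subseteq> ?split ` {0..length (snd y)}"
  proof
    fix pq assume "pq \<in> csupp (comul (path_coalg V E s t) y :: _ \<Rightarrow> 'k)"
    then have "fst (snd pq) = path_end t (fst pq)" "(fst (fst pq), snd (fst pq) @ snd (snd pq)) = y"
      by (auto simp: csupp_def comul_path_coalg split: if_splits)
    then have "pq = ?split (length (snd (fst pq)))"
      by (cases pq) auto
    moreover have "length (snd (fst pq)) \<le> length (snd y)"
      using \<open>(fst (fst pq), _) = y\<close> by auto
    ultimately show "pq \<in> ?split ` {0..length (snd y)}" by auto
  qed
  then show ?thesis by (rule finite_subset) simp
qed

lemma dual_mult_delta_left:
  assumes "is_path V E s t y" and Q: "Q = (path_end t P, drop (length (snd P)) (snd y))"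
  shows "dual_mult (path_coalg V E s t) (delta P) g y = comul (path_coalg V E s t) y (P, Q) * (g Q :: 'k::field)"
proof -
  let ?C = "path_coalg V E s t :: (_, 'k) coalg"
  let ?h = "\<lambda>pq. comul ?C y pq * delta P (fst pq) * g (snd pq)"
  have "dual_mult ?C (delta P) g y = sum ?h (csupp (comul ?C y))"
    using assms by (simp add: dual_mult_def)
  also have "\<dots> = (if (P, Q) \<in> csupp (comul ?C y) then ?h (P, Q) else 0)"
  proof (rule sum_eq_single[OF finite_csupp_comul_path_coalg])
    fix pq assume "pq \<in> csupp (comul ?C y)" "pq \<noteq> (P, Q)"
    then show "?h pq = 0"
      using comul_path_coalg_ne_zero(1)[of V E s t y "fst pq" "snd pq", where 'k = 'k] Q
      by (cases pq) (auto simp: csupp_def)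
  qed
  also have "\<dots> = comul ?C y (P, Q) * g Q" by (simp add: csupp_def)
  finally show ?thesis .
qed

lemma dual_mult_delta_right:
  assumes "is_path V E s t y" and Q: "Q = (fst y, take (length (snd y) - length (snd P)) (snd y))"
  shows "dual_mult (path_coalg V E s t) g (delta P) y = comul (path_coalg V E s t) y (Q, P) * (g Q :: 'k::field)"
proof -
  let ?C = "path_coalg V E s t :: (_, 'k) coalg"
  let ?h = "\<lambda>pq. comul ?C y pq * g (fst pq) * delta P (snd pq)"
  have "dual_mult ?C g (delta P) y = sum ?h (csupp (comul ?C y))"
    using assms by (simp add: dual_mult_def)
  also have "\<dots> = (if (Q, P) \<in> csupp (comul ?C y) then ?h (Q, P) else 0)"
  proof (rule sum_eq_single[OF finite_csupp_comul_path_coalg])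
    fix pq assume "pq \<in> csupp (comul ?C y)" "pq \<noteq> (Q, P)"
    then show "?h pq = 0"
      using comul_path_coalg_ne_zero(2)[of V E s t y "fst pq" "snd pq", where 'k = 'k] Q
      by (cases pq) (auto simp: csupp_def)
  qed
  also have "\<dots> = comul ?C y (Q, P) * g Q" by (simp add: csupp_def)
  finally show ?thesis .
qed

lemma dual_mult_vertex_left:
  assumes "is_path V E s t y"
  shows "dual_mult (path_coalg V E s t) (delta (v, [])) g y = (if fst y = v then g y else (0::'k::field))"
  using assms by (cases y) (auto simp: dual_mult_delta_left comul_path_coalg is_path_def)

lemma dual_mult_arrow_left:
  assumes "quiver V E s t" and "e \<in> E" and q: "is_path V E s t q" and "fst q = t e"
  shows "dual_mult (path_coalg V E s t) (delta (s e, [e])) g (s e, e # snd q) = (g q :: 'k::field)"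
  using assms is_path_arrow[OF assms(1,2)] is_path_Cons_arrow[OF assms]
  by (cases q) (simp add: dual_mult_delta_left comul_path_coalg path_end_def)

lemma dual_mult_vertex_right:
  assumes "quiver V E s t" and y: "is_path V E s t y"
  shows "dual_mult (path_coalg V E s t) g (delta (v, [])) y = (if path_end t y = v then g y else (0::'k::field))"
  using assms path_end_in_vertices[OF assms] by (cases y) (auto simp: dual_mult_delta_right comul_path_coalg)

lemma dual_mult_arrow_right:
  assumes "quiver V E s t" and "e \<in> E" and p: "is_path V E s t p" and "path_end t p = s e"
  shows "dual_mult (path_coalg V E s t) g (delta (s e, [e])) (fst p, snd p @ [e]) = (g p :: 'k::field)"
  using assms is_path_arrow[OF assms(1,2)] is_path_snoc_arrow[OF assms]
  by (cases p) (simp add: dual_mult_delta_right comul_path_coalg)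

section \<open>Quivers with an arrow\<close>

lemma vertex_eigenvector_left_eq_zero:
  assumes Q: "quiver V E s t" and e: "e \<in> E"
    and eigen: "\<forall>f\<in>dual_elems (path_coalg V E s t). dual_mult (path_coalg V E s t) f g = (\<lambda>y. f (t e, []) * g y)"
  shows "g = (\<lambda>_. 0 :: 'k::field)"
proof
  fix y
  let ?C = "path_coalg V E s t :: (_, 'k) coalg"
  have te: "t e \<in> V" using Q e by (simp add: quiver_def)
  have "dual_mult ?C (delta (t e, [])) g = g"
    using eigen delta_in_dual_elems[of "(t e, [])" ?C] te by simp
  then have g_vertex: "g y = dual_mult ?C (delta (t e, [])) g y" by simp
  show "g y = 0"
  proof (cases "is_path V E s t y \<and> fst y = t e")
    case False
    then show ?thesis
      using g_vertex dual_mult_vertex_left[of V E s t y "t e" g] dual_mult_outside_basis[of y ?C] by auto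
  next
    case True
    have "dual_mult ?C (delta (s e, [e])) g = (\<lambda>_. 0)"
      using eigen delta_in_dual_elems[of "(s e, [e])" ?C] is_path_arrow[OF Q e] by simp
    then show ?thesis using dual_mult_arrow_left[OF Q e, of y g] True by (metis (no_types))
  qed
qed

lemma vertex_eigenvector_right_eq_zero:
  assumes Q: "quiver V E s t" and e: "e \<in> E"
    and eigen: "\<forall>f\<in>dual_elems (path_coalg V E s t). dual_mult (path_coalg V E s t) g f = (\<lambda>y. f (s e, []) * g y)"
  shows "g = (\<lambda>_. 0 :: 'k::field)"
proof
  fix y
  let ?C = "path_coalg V E s t :: (_, 'k) coalg"
  have se: "s e \<in> V" using Q e by (simp add: quiver_def)
  have "dual_mult ?C g (delta (s e, [])) = g"
    using eigen delta_in_dual_elems[of "(s e, [])" ?C] se by simp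
  then have g_vertex: "g y = dual_mult ?C g (delta (s e, [])) y" by simp
  show "g y = 0"
  proof (cases "is_path V E s t y \<and> path_end t y = s e")
    case False
    then show ?thesis
      using g_vertex dual_mult_vertex_right[OF Q, of y g "s e"] dual_mult_outside_basis[of y ?C] by auto
  next
    case True
    have "dual_mult ?C g (delta (s e, [e])) = (\<lambda>_. 0)"
      using eigen delta_in_dual_elems[of "(s e, [e])" ?C] is_path_arrow[OF Q e] by simp
    then show ?thesis using dual_mult_arrow_right[OF Q e, of y g] True by (metis (no_types))
  qed
qed

lemma free_vertex_eigenvector_left_eq_zero:
  fixes u :: "'i \<times> 'v \<times> 'e list \<Rightarrow> 'k::field"
  assumes Q: "quiver V E s t" and e: "e \<in> E"
    and eigen: "\<forall>f\<in>dual_elems (path_coalg V E s t). free_lact (path_coalg V E s t) f u = (\<lambda>z. f (t e, []) * u z)"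
  shows "u = (\<lambda>_. 0)"
proof
  fix z :: "'i \<times> 'v \<times> 'e list"
  obtain i y where z: "z = (i, y)" by (cases z)
  have "(\<lambda>y. u (i, y)) = (\<lambda>_. 0)"
  proof (rule vertex_eigenvector_left_eq_zero[OF Q e], intro ballI ext)
    fix f y assume "f \<in> dual_elems (path_coalg V E s t :: (_, 'k) coalg)"
    then show "dual_mult (path_coalg V E s t) f (\<lambda>y. u (i, y)) y = f (t e, []) * u (i, y)"
      using eigen by (auto simp: free_lact_def dest!: bspec fun_cong[where x = "(i, y)"])
  qed
  then show "u z = 0" unfolding z by (rule fun_cong)
qed

lemma free_vertex_eigenvector_right_eq_zero:
  fixes u :: "'i \<times> 'v \<times> 'e list \<Rightarrow> 'k::field"
  assumes Q: "quiver V E s t" and e: "e \<in> E"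
    and eigen: "\<forall>f\<in>dual_elems (path_coalg V E s t). free_ract (path_coalg V E s t) u f = (\<lambda>z. f (s e, []) * u z)"
  shows "u = (\<lambda>_. 0)"
proof
  fix z :: "'i \<times> 'v \<times> 'e list"
  obtain i y where z: "z = (i, y)" by (cases z)
  have "(\<lambda>y. u (i, y)) = (\<lambda>_. 0)"
  proof (rule vertex_eigenvector_right_eq_zero[OF Q e], intro ballI ext)
    fix f y assume "f \<in> dual_elems (path_coalg V E s t :: (_, 'k) coalg)"
    then show "dual_mult (path_coalg V E s t) (\<lambda>y. u (i, y)) f y = f (s e, []) * u (i, y)"
      using eigen by (auto simp: free_ract_def dest!: bspec fun_cong[where x = "(i, y)"])
  qed
  then show "u z = 0" unfolding z by (rule fun_cong)
qed

lemma comul_path_coalg_vertex: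
  "v \<in> V \<Longrightarrow> comul (path_coalg V E s t) (v, []) pq = (if pq = ((v, []), (v, [])) then 1 else 0)"
  by (cases pq) (auto simp: comul_path_coalg path_end_def)

lemma lhit_path_coalg_vertex:
  assumes "v \<in> V"
  shows "lhit (path_coalg V E s t) f (v, []) = (\<lambda>p. if p = (v, []) then f (v, []) else (0::'k::field))"
proof
  fix p
  have "{q. comul (path_coalg V E s t) (v, []) (p, q) \<noteq> (0::'k)} = (if p = (v, []) then {(v, [])} else {})"
    using assms by (auto simp: comul_path_coalg_vertex)
  then show "lhit (path_coalg V E s t) f (v, []) p = (if p = (v, []) then f (v, []) else 0)"
    using assms by (simp add: lhit_def comul_path_coalg_vertex)
qed

lemma rhit_path_coalg_vertex:
  assumes "v \<in> V"
  shows "rhit (path_coalg V E s t) (v, []) f = (\<lambda>p. if p = (v, []) then f (v, []) else (0::'k::field))"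
proof
  fix p
  have "{q. comul (path_coalg V E s t) (v, []) (q, p) \<noteq> (0::'k)} = (if p = (v, []) then {(v, [])} else {})"
    using assms by (auto simp: comul_path_coalg_vertex)
  then show "rhit (path_coalg V E s t) (v, []) f p = (if p = (v, []) then f (v, []) else 0)"
    using assms by (simp add: rhit_def comul_path_coalg_vertex)
qed

lemma not_coFrobenius_path_coalg:
  assumes Q: "quiver V E s t" and e: "e \<in> E"
  shows "\<not> coFrobenius (path_coalg V E s t :: (_, 'k::field) coalg)"
proof
  let ?C = "path_coalg V E s t :: (_, 'k) coalg" and ?v = "(t e, [])"
  assume "coFrobenius ?C"
  then obtain \<phi> where inj: "\<forall>x\<in>celems ?C. lin_ext \<phi> x = (\<lambda>_. 0) \<longrightarrow> x = (\<lambda>_. 0)"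
    and lin: "\<forall>f\<in>dual_elems ?C. \<forall>b\<in>cbasis ?C. lin_ext \<phi> (lhit ?C f b) = dual_mult ?C f (\<phi> b)"
    unfolding coFrobenius_def by blast
  have v: "?v \<in> cbasis ?C" using Q e by (simp add: quiver_def)
  have "\<forall>f\<in>dual_elems ?C. dual_mult ?C f (\<phi> ?v) = (\<lambda>z. f ?v * \<phi> ?v z)"
    using lin[rule_format, OF _ v] v by (simp add: lhit_path_coalg_vertex lin_ext_delta)
  then have "\<phi> ?v = (\<lambda>_. 0)" by (rule vertex_eigenvector_left_eq_zero[OF Q e])
  with lin_ext_inj_basis_ne_zero[OF inj v] show False by contradiction
qed

lemma not_left_qcF_path_coalg:
  fixes V :: "'v set" and E :: "'e set"
  assumes Q: "quiver V E s t" and e: "e \<in> E"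
  shows "\<not> left_qcF (path_coalg V E s t :: (_, 'k::field) coalg)"
proof
  let ?C = "path_coalg V E s t :: (_, 'k) coalg" and ?v = "(t e, [])"
  assume "left_qcF ?C"
  then obtain I and \<phi> :: "'v \<times> 'e list \<Rightarrow> (('v \<times> 'e list) \<times> nat) \<times> 'v \<times> 'e list \<Rightarrow> 'k" where
    "\<forall>b\<in>cbasis ?C. \<phi> b \<in> free_mod ?C I" and inj: "\<forall>x\<in>celems ?C. lin_ext \<phi> x = (\<lambda>_. 0) \<longrightarrow> x = (\<lambda>_. 0)"
    and lin: "\<forall>f\<in>dual_elems ?C. \<forall>b\<in>cbasis ?C. lin_ext \<phi> (lhit ?C f b) = free_lact ?C f (\<phi> b)"
    unfolding left_qcF_def by (elim exE conjE) (rule that; assumption)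
  have v: "?v \<in> cbasis ?C" using Q e by (simp add: quiver_def)
  have "\<forall>f\<in>dual_elems ?C. free_lact ?C f (\<phi> ?v) = (\<lambda>z. f ?v * \<phi> ?v z)"
    using lin[rule_format, OF _ v] v by (simp add: lhit_path_coalg_vertex lin_ext_delta)
  then have "\<phi> ?v = (\<lambda>_. 0)" by (rule free_vertex_eigenvector_left_eq_zero[OF Q e])
  with lin_ext_inj_basis_ne_zero[OF inj v] show False by contradiction
qed

lemma not_right_qcF_path_coalg:
  fixes V :: "'v set" and E :: "'e set"
  assumes Q: "quiver V E s t" and e: "e \<in> E"
  shows "\<not> right_qcF (path_coalg V E s t :: (_, 'k::field) coalg)"
proof
  let ?C = "path_coalg V E s t :: (_, 'k) coalg" and ?v = "(s e, [])"
  assume "right_qcF ?C"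
  then obtain I and \<phi> :: "'v \<times> 'e list \<Rightarrow> (('v \<times> 'e list) \<times> nat) \<times> 'v \<times> 'e list \<Rightarrow> 'k" where
    "\<forall>b\<in>cbasis ?C. \<phi> b \<in> free_mod ?C I" and inj: "\<forall>x\<in>celems ?C. lin_ext \<phi> x = (\<lambda>_. 0) \<longrightarrow> x = (\<lambda>_. 0)"
    and lin: "\<forall>f\<in>dual_elems ?C. \<forall>b\<in>cbasis ?C. lin_ext \<phi> (rhit ?C b f) = free_ract ?C (\<phi> b) f"
    unfolding right_qcF_def by (elim exE conjE) (rule that; assumption)
  have v: "?v \<in> cbasis ?C" using Q e by (simp add: quiver_def)
  have "\<forall>f\<in>dual_elems ?C. free_ract ?C (\<phi> ?v) f = (\<lambda>z. f ?v * \<phi> ?v z)"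
    using lin[rule_format, OF _ v] v by (simp add: rhit_path_coalg_vertex lin_ext_delta)
  then have "\<phi> ?v = (\<lambda>_. 0)" by (rule free_vertex_eigenvector_right_eq_zero[OF Q e])
  with lin_ext_inj_basis_ne_zero[OF inj v] show False by contradiction
qed

text \<open>The comodule of the vertex \<open>v\<close>: one basis vector \<open>m\<^sub>0\<close> with coaction \<open>m\<^sub>0 \<mapsto> m\<^sub>0 \<otimes> v\<close>
  (as a left comodule, \<open>m\<^sub>0 \<mapsto> v \<otimes> m\<^sub>0\<close>).\<close>
definition vertex_comod :: "'v \<Rightarrow> nat \<Rightarrow> nat \<Rightarrow> 'v \<times> 'e list \<Rightarrow> 'k::field" where
  "vertex_comod v a m c = (if a = 0 \<and> m = 0 \<and> c = (v, []) then 1 else 0)"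

lemma vertex_comod_support:
  "{c. vertex_comod v a m c \<noteq> (0::'k::field)} = (if a = 0 \<and> m = 0 then {(v, [])} else {})"
  by (auto simp: vertex_comod_def)

lemma right_comod_vertex_comod:
  "v \<in> V \<Longrightarrow> right_comod (path_coalg V E s t) 1 (vertex_comod v :: _ \<Rightarrow> _ \<Rightarrow> _ \<Rightarrow> 'k::field)"
  unfolding right_comod_def
  by (auto simp: vertex_comod_support comul_path_coalg_vertex) (auto simp: vertex_comod_def split: if_splits)

lemma left_comod_vertex_comod:
  "v \<in> V \<Longrightarrow> left_comod (path_coalg V E s t) 1 (vertex_comod v :: _ \<Rightarrow> _ \<Rightarrow> _ \<Rightarrow> 'k::field)"
  unfolding left_comod_def
  by (auto simp: vertex_comod_support comul_path_coalg_vertex) (auto simp: vertex_comod_def split: if_splits)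

lemma comod_act_vertex_comod: "comod_act (vertex_comod v) f 0 0 = f (v, [])"
  by (simp add: comod_act_def vertex_comod_support) (simp add: vertex_comod_def)

lemma not_left_fqcF_path_coalg:
  assumes Q: "quiver V E s t" and e: "e \<in> E"
  shows "\<not> left_fqcF (path_coalg V E s t :: (_, 'k::field) coalg)"
proof
  let ?C = "path_coalg V E s t :: (_, 'k) coalg"
  assume fqcF: "left_fqcF ?C"
  have "t e \<in> V" using Q e by (simp add: quiver_def)
  from fqcF[unfolded left_fqcF_def, rule_format, OF right_comod_vertex_comod[OF this]]
  obtain I and \<phi> :: "nat \<Rightarrow> nat \<times> _ \<Rightarrow> 'k" where
    "\<forall>a<1. \<phi> a \<in> free_mod ?C I" and inj: "\<forall>x :: nat \<Rightarrow> 'k. (\<forall>m. x m \<noteq> 0 \<longrightarrow> m < 1) \<longrightarrow>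
              (\<lambda>z. \<Sum>a<1. x a * \<phi> a z) = (\<lambda>_. 0) \<longrightarrow> x = (\<lambda>_. 0)"
    and lin: "\<forall>f\<in>dual_elems ?C. \<forall>a<1.
              (\<lambda>z. \<Sum>m<1. comod_act (vertex_comod (t e)) f a m * \<phi> m z) = free_lact ?C f (\<phi> a)"
    by (elim exE conjE) (rule that; assumption)
  have "\<forall>f\<in>dual_elems ?C. free_lact ?C f (\<phi> 0) = (\<lambda>z. f (t e, []) * \<phi> 0 z)"
    using lin by (simp add: comod_act_vertex_comod)
  then have "\<phi> 0 = (\<lambda>_. 0)" by (rule free_vertex_eigenvector_left_eq_zero[OF Q e])
  then have "(\<lambda>z. \<Sum>a<1. delta 0 a * \<phi> a z) = (\<lambda>_. 0)" by simp
  then have "(delta 0 :: nat \<Rightarrow> 'k) = (\<lambda>_. 0)" using inj by simp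
  then show False by (rule delta_ne_zero[THEN notE])
qed

lemma not_right_fqcF_path_coalg:
  assumes Q: "quiver V E s t" and e: "e \<in> E"
  shows "\<not> right_fqcF (path_coalg V E s t :: (_, 'k::field) coalg)"
proof
  let ?C = "path_coalg V E s t :: (_, 'k) coalg"
  assume fqcF: "right_fqcF ?C"
  have "s e \<in> V" using Q e by (simp add: quiver_def)
  from fqcF[unfolded right_fqcF_def, rule_format, OF left_comod_vertex_comod[OF this]]
  obtain I and \<phi> :: "nat \<Rightarrow> nat \<times> _ \<Rightarrow> 'k" where
    "\<forall>a<1. \<phi> a \<in> free_mod ?C I" and inj: "\<forall>x :: nat \<Rightarrow> 'k. (\<forall>m. x m \<noteq> 0 \<longrightarrow> m < 1) \<longrightarrow>
              (\<lambda>z. \<Sum>a<1. x a * \<phi> a z) = (\<lambda>_. 0) \<longrightarrow> x = (\<lambda>_. 0)"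
    and lin: "\<forall>f\<in>dual_elems ?C. \<forall>a<1.
              (\<lambda>z. \<Sum>m<1. comod_act (vertex_comod (s e)) f a m * \<phi> m z) = free_ract ?C (\<phi> a) f"
    by (elim exE conjE) (rule that; assumption)
  have "\<forall>f\<in>dual_elems ?C. free_ract ?C (\<phi> 0) f = (\<lambda>z. f (s e, []) * \<phi> 0 z)"
    using lin by (simp add: comod_act_vertex_comod)
  then have "\<phi> 0 = (\<lambda>_. 0)" by (rule free_vertex_eigenvector_right_eq_zero[OF Q e])
  then have "(\<lambda>z. \<Sum>a<1. delta 0 a * \<phi> a z) = (\<lambda>_. 0)" by simp
  then have "(delta 0 :: nat \<Rightarrow> 'k) = (\<lambda>_. 0)" using inj by simp
  then show False by (rule delta_ne_zero[THEN notE])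
qed

section \<open>Vertex lines and simple subcoalgebras\<close>

definition vertex_line :: "'v \<Rightarrow> ('v \<times> 'e list \<Rightarrow> 'k::field) set" where
  "vertex_line v = {x. \<exists>c. x = (\<lambda>a. c * delta (v, []) a)}"

lemma delta_in_vertex_line: "delta (v, []) \<in> vertex_line v"
  unfolding vertex_line_def by (auto intro: exI[of _ 1])

lemma vertex_line_ne_zero: "(vertex_line v :: ('v \<times> 'e list \<Rightarrow> 'k::field) set) \<noteq> {\<lambda>_. 0}"
proof
  assume "(vertex_line v :: ('v \<times> 'e list \<Rightarrow> 'k) set) = {\<lambda>_. 0}"
  moreover have "(delta (v, []) :: 'v \<times> 'e list \<Rightarrow> 'k) \<in> vertex_line v" by (rule delta_in_vertex_line)
  ultimately have "(delta (v, []) :: 'v \<times> 'e list \<Rightarrow> 'k) = (\<lambda>_. 0)" by blast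
  then show False by (rule delta_ne_zero[THEN notE])
qed

lemma fspan_vertex_line: "fspan (vertex_line v) = vertex_line v"
proof
  show "fspan (vertex_line v) \<subseteq> vertex_line v"
  proof
    fix x assume "x \<in> fspan (vertex_line v)"
    then obtain F c where F: "F \<subseteq> vertex_line v" and x: "x = (\<lambda>z. \<Sum>u\<in>F. c u * u z)"
      unfolding fspan_def by blast
    have "u z = u (v, []) * delta (v, []) z" if "u \<in> F" for u z
      using that F by (auto simp: vertex_line_def)
    then have "x = (\<lambda>z. (\<Sum>u\<in>F. c u * u (v, [])) * delta (v, []) z)"
      unfolding x by (auto simp: sum_distrib_right mult.assoc intro: sum.cong)
    then show "x \<in> vertex_line v" unfolding vertex_line_def by blast
  qed
next
  show "vertex_line v \<subseteq> fspan (vertex_line v)"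
    unfolding fspan_def by (auto intro!: exI[of _ "{_}"] exI[of _ "\<lambda>_. 1"])
qed

lemma vertex_line_subset:
  fixes D :: "('v \<times> 'e list \<Rightarrow> 'k::field) set"
  assumes "fspan D = D" and "y \<in> D" and "y \<in> vertex_line v" and "y \<noteq> (\<lambda>_. 0)"
  shows "vertex_line v \<subseteq> D"
proof
  fix z :: "'v \<times> 'e list \<Rightarrow> 'k" assume "z \<in> vertex_line v"
  then obtain d where z: "z = (\<lambda>a. d * delta (v, []) a)" by (auto simp: vertex_line_def)
  obtain c where y: "y = (\<lambda>a. c * delta (v, []) a)" using assms(3) by (auto simp: vertex_line_def)
  with assms(4) have "c \<noteq> 0" by auto
  then have "z = (\<lambda>a. \<Sum>w\<in>{y}. d / c * w a)" by (simp add: y z)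
  also have "\<dots> \<in> D" using assms(1,2) by (intro lincomb_in_span_closed) auto
  finally show "z \<in> D" .
qed

lemma vertex_line_vanishes: "x \<in> vertex_line v \<Longrightarrow> w \<noteq> v \<Longrightarrow> x (w, []) = 0"
  by (auto simp: vertex_line_def)

lemma subcoalgebra_vertex_line:
  fixes V :: "'v set" and E :: "'e set"
  assumes v: "v \<in> V"
  shows "subcoalgebra (path_coalg V E s t) (vertex_line v :: ('v \<times> 'e list \<Rightarrow> 'k::field) set)"
  unfolding subcoalgebra_def
proof (intro conjI ballI)
  let ?C = "path_coalg V E s t :: (_, 'k) coalg"
  show "vertex_line v \<subseteq> celems ?C"
  proof
    fix x assume "x \<in> (vertex_line v :: ('v \<times> 'e list \<Rightarrow> 'k) set)"
    then have "csupp x \<subseteq> {(v, [])}" by (auto simp: vertex_line_def csupp_def split: if_splits)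
    then show "x \<in> celems ?C" using v by (auto simp: celems_def intro: finite_subset)
  qed
  show "fspan (vertex_line v) = vertex_line v" by (rule fspan_vertex_line)
  fix x assume "x \<in> (vertex_line v :: ('v \<times> 'e list \<Rightarrow> 'k) set)"
  then obtain c where x: "x = (\<lambda>a. c * delta (v, []) a)" by (auto simp: vertex_line_def)
  have x_line: "x \<in> vertex_line v" unfolding x vertex_line_def by blast
  have "lin_ext (comul ?C) x = (\<lambda>pq. c * comul ?C (v, []) pq)"
    unfolding x using lin_ext_delta[of "comul ?C" "(v, [])" c] by (simp add: if_distrib cong: if_cong)
  also have "\<dots> = (\<lambda>z. \<Sum>u\<in>{\<lambda>(p, q). x p * delta (v, []) q}. 1 * u z)"
    using v by (intro ext) (auto simp: comul_path_coalg_vertex x split: if_splits)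
  also have "\<dots> \<in> tensor_sq (vertex_line v)"
  proof -
    have "(\<lambda>(p, q). x p * delta (v, []) q) \<in> {\<lambda>(p, q). x p * y q | x y. x \<in> vertex_line v \<and> y \<in> vertex_line v}"
      using x_line delta_in_vertex_line[of v] by (intro CollectI exI[of _ x] exI[of _ "delta (v, [])"]) simp
    then show ?thesis unfolding tensor_sq_def fspan_def
      by (intro CollectI exI[of _ "{\<lambda>(p, q). x p * delta (v, []) q}"] exI[of _ "\<lambda>_. 1"]) simp
  qed
  finally show "lin_ext (comul ?C) x \<in> tensor_sq (vertex_line v)" .
qed

lemma simple_subcoalgebra_vertex_line:
  fixes V :: "'v set" and E :: "'e set"
  assumes "v \<in> V"
  shows "simple_subcoalgebra (path_coalg V E s t) (vertex_line v :: ('v \<times> 'e list \<Rightarrow> 'k::field) set)"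
  unfolding simple_subcoalgebra_def
proof (intro conjI allI impI subcoalgebra_vertex_line[OF assms] vertex_line_ne_zero)
  fix D assume D: "subcoalgebra (path_coalg V E s t) D \<and> D \<subseteq> (vertex_line v :: ('v \<times> 'e list \<Rightarrow> 'k) set)"
  then have span: "fspan D = D" by (simp add: subcoalgebra_def)
  show "D = {\<lambda>_. 0} \<or> D = vertex_line v"
  proof (cases "D \<subseteq> {\<lambda>_. 0}")
    case True
    then show ?thesis using zero_in_span_closed[OF span] by blast
  next
    case False
    then obtain y where "y \<in> D" "y \<noteq> (\<lambda>_. 0)" by blast
    then have "vertex_line v \<subseteq> D" using D by (intro vertex_line_subset[OF span]) auto
    then show ?thesis using D by blast
  qed
qed

lemma lin_ext_comul_slice_longest:
  assumes x: "x \<in> celems (path_coalg V E s t)" and P: "P \<in> csupp x"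
    and longest: "\<forall>q\<in>csupp x. length (snd q) \<le> length (snd P)"
  shows "(\<lambda>a. lin_ext (comul (path_coalg V E s t)) x (a, P)) = (\<lambda>a. x P * delta (fst P, []) a :: 'k::field)"
proof
  fix a
  let ?C = "path_coalg V E s t :: (_, 'k) coalg"
  have fin: "finite (csupp x)" and path: "is_path V E s t P" using x P by (auto simp: celems_def)
  have "lin_ext (comul ?C) x (a, P) = (\<Sum>b\<in>csupp x. x b * comul ?C b (a, P))"
    by (simp add: lin_ext_def)
  also have "\<dots> = (if P \<in> csupp x then x P * comul ?C P (a, P) else 0)"
  proof (rule sum_eq_single[OF fin])
    fix b assume b: "b \<in> csupp x" "b \<noteq> P"
    show "x b * comul ?C b (a, P) = 0"
    proof (rule ccontr)
      assume "x b * comul ?C b (a, P) \<noteq> 0"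
      then have "fst P = path_end t a" and b_eq: "b = (fst a, snd a @ snd P)"
        by (auto simp: comul_path_coalg split: if_splits)
      moreover have "snd a = []" using longest b(1) b_eq by auto
      ultimately show False using b(2) by (simp add: path_end_def prod_eq_iff)
    qed
  qed
  also have "\<dots> = x P * delta (fst P, []) a"
    using P path
    by (cases a) (auto simp: comul_path_coalg is_path_def path_end_def dest: arg_cong[where f = "\<lambda>p. length (snd p)"])
  finally show "lin_ext (comul ?C) x (a, P) = x P * delta (fst P, []) a" .
qed

lemma simple_subcoalgebra_path_coalg_eq_vertex_line:
  fixes V :: "'v set" and E :: "'e set" and D :: "('v \<times> 'e list \<Rightarrow> 'k::field) set"
  assumes D: "simple_subcoalgebra (path_coalg V E s t) D"
  shows "\<exists>v\<in>V. D = vertex_line v"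
proof -
  let ?C = "path_coalg V E s t :: (_, 'k) coalg"
  have sub: "subcoalgebra ?C D" and D_ne: "D \<noteq> {\<lambda>_. 0}"
    and minimal: "\<forall>D'. subcoalgebra ?C D' \<and> D' \<subseteq> D \<longrightarrow> D' = {\<lambda>_. 0} \<or> D' = D"
    using D unfolding simple_subcoalgebra_def by blast+
  from sub have cel: "D \<subseteq> celems ?C" and span: "fspan D = D"
    and comul_D: "\<forall>x\<in>D. lin_ext (comul ?C) x \<in> tensor_sq D"
    unfolding subcoalgebra_def by blast+
  obtain x where x: "x \<in> D" "x \<noteq> (\<lambda>_. 0)" using D_ne zero_in_span_closed[OF span] by blast
  then have fin: "finite (csupp x)" and ne: "csupp x \<noteq> {}" using cel by (auto simp: celems_def csupp_def)
  have "Max ((\<lambda>q. length (snd q)) ` csupp x) \<in> (\<lambda>q. length (snd q)) ` csupp x"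
    using fin ne by (intro Max_in) auto
  then obtain P where P: "P \<in> csupp x" "length (snd P) = Max ((\<lambda>q. length (snd q)) ` csupp x)"
    by (metis (no_types, lifting) imageE)
  then have longest: "\<forall>q\<in>csupp x. length (snd q) \<le> length (snd P)" using fin by simp
  have v: "fst P \<in> V" using P(1) cel x(1) by (auto simp: celems_def is_path_def)
  have "x \<in> celems ?C" using cel x(1) by blast
  from tensor_sq_slice[OF span comul_D[rule_format, OF x(1)], of P]
  have slice: "(\<lambda>a. x P * delta (fst P, []) a) \<in> D"
    unfolding lin_ext_comul_slice_longest[OF \<open>x \<in> celems ?C\<close> P(1) longest] .
  have "(\<lambda>a. x P * delta (fst P, []) a) \<noteq> (\<lambda>_. 0)"
  proof
    assume "(\<lambda>a. x P * delta (fst P, []) a) = (\<lambda>_. 0)"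
    from fun_cong[OF this, of "(fst P, [])"] P(1) show False by (simp add: csupp_def)
  qed
  moreover have "(\<lambda>a. x P * delta (fst P, []) a) \<in> vertex_line (fst P)"
    unfolding vertex_line_def by blast
  ultimately have line_sub: "vertex_line (fst P) \<subseteq> D"
    by (intro vertex_line_subset[OF span slice])
  have "subcoalgebra ?C (vertex_line (fst P))" by (rule subcoalgebra_vertex_line[OF v])
  from minimal[rule_format, OF conjI[OF this line_sub]]
  have "vertex_line (fst P) = D" by (simp add: vertex_line_ne_zero)
  then have "D = vertex_line (fst P)" by (rule sym)
  with v show ?thesis by (rule rev_bexI)
qed

lemma not_cosemisimple_path_coalg:
  assumes Q: "quiver V E s t" and e: "e \<in> E"
  shows "\<not> cosemisimple (path_coalg V E s t :: (_, 'k::field) coalg)"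
proof
  let ?C = "path_coalg V E s t :: (_, 'k) coalg" and ?p = "(s e, [e])"
  assume "cosemisimple ?C"
  then obtain \<D> where simple: "\<forall>D\<in>\<D>. simple_subcoalgebra ?C D" and span: "fspan (\<Union>\<D>) = celems ?C"
    unfolding cosemisimple_def by blast
  have "delta ?p \<in> fspan (\<Union>\<D>)" using span delta_in_celems[of ?p ?C] is_path_arrow[OF Q e] by simp
  then obtain F c where F: "F \<subseteq> \<Union>\<D>" and p: "delta ?p = (\<lambda>z. \<Sum>u\<in>F. c u * u z)"
    unfolding fspan_def by blast
  have vanish: "u ?p = 0" if "u \<in> F" for u
  proof -
    obtain D where "D \<in> \<D>" "u \<in> D" using F \<open>u \<in> F\<close> by blast
    then obtain v where "u \<in> vertex_line v"
      using simple simple_subcoalgebra_path_coalg_eq_vertex_line by metis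
    then show ?thesis by (auto simp: vertex_line_def)
  qed
  then have "(\<Sum>u\<in>F. c u * u ?p) = 0" by (intro sum.neutral) (simp add: vanish)
  moreover have "(\<Sum>u\<in>F. c u * u ?p) = 1" using fun_cong[OF p, of ?p] by simp
  ultimately show False by simp
qed

section \<open>Comodules over a grouplike basis\<close>

text \<open>An \<open>n\<close>-dimensional comodule, in the coordinates of \<open>right_comod\<close>, over the coalgebra
  whose basis \<open>B\<close> consists of grouplike elements (\<open>\<Delta> b = b \<otimes> b\<close>, \<open>\<epsilon> b = 1\<close>); for such
  coalgebras left and right comodules are the same.\<close>
definition grouplike_comod :: "'b set \<Rightarrow> nat \<Rightarrow> (nat \<Rightarrow> nat \<Rightarrow> 'b \<Rightarrow> 'k::comm_semiring_1) \<Rightarrow> bool" where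
  "grouplike_comod B n r \<longleftrightarrow>
     (\<forall>a m c. r a m c \<noteq> 0 \<longrightarrow> a < n \<and> m < n \<and> c \<in> B) \<and>
     (\<forall>a m. finite {c. r a m c \<noteq> 0}) \<and>
     (\<forall>a<n. \<forall>i<n. \<forall>b c. (\<Sum>m<n. r a m c * r m i b) = (if b = c \<and> b \<in> B then r a i b else 0)) \<and>
     (\<forall>a<n. \<forall>m<n. (\<Sum>c\<in>{c. r a m c \<noteq> 0}. r a m c * (if c \<in> B then 1 else 0)) = (if a = m then 1 else 0))"

lemma grouplike_comod_rows_injective:
  fixes r :: "nat \<Rightarrow> nat \<Rightarrow> 'b \<Rightarrow> 'k::field"
  assumes g: "grouplike_comod B n r"
    and x_supp: "\<forall>m. x m \<noteq> 0 \<longrightarrow> m < n" and x_ker: "(\<lambda>z. \<Sum>a<n. x a * r a (fst z) (snd z)) = (\<lambda>_. 0)"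
  shows "x = (\<lambda>_. 0)"
proof
  fix m
  show "x m = 0"
  proof (cases "m < n")
    case False
    then show ?thesis using x_supp by auto
  next
    case True
    let ?S = "\<Union>a<n. {c. r a m c \<noteq> 0}"
    have fin: "finite ?S" using g by (auto simp: grouplike_comod_def)
    have "x m = (\<Sum>a<n. x a * (if a = m then 1 else 0))"
      using True by (subst sum_eq_single[where a = m]) auto
    also have "\<dots> = (\<Sum>a<n. (\<Sum>c\<in>{c. r a m c \<noteq> 0}. r a m c * (if c \<in> B then 1 else 0)) * x a)"
      using g True by (intro sum.cong) (auto simp: grouplike_comod_def mult.commute)
    also have "\<dots> = (\<Sum>c\<in>?S. (if c \<in> B then 1 else 0) * (\<Sum>a<n. r a m c * x a))"
      by (rule sum_restrict_swap[OF fin]) auto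
    also have "\<dots> = 0"
    proof (rule sum.neutral, rule ballI)
      fix c
      have "(\<Sum>a<n. x a * r a m c) = 0" using fun_cong[OF x_ker, of "(m, c)"] by simp
      then show "(if c \<in> B then 1 else 0) * (\<Sum>a<n. r a m c * x a) = 0" by (simp add: mult.commute)
    qed
    finally show ?thesis .
  qed
qed

lemma grouplike_comod_rows_equivariant:
  fixes r :: "nat \<Rightarrow> nat \<Rightarrow> 'b \<Rightarrow> 'k::field"
  assumes g: "grouplike_comod B n r" and a: "a < n"
  shows "(\<Sum>m<n. comod_act r f a m * r m i b) = (if b \<in> B then f b * r a i b else 0)"
proof (cases "i < n")
  case False
  with g have "\<forall>m. r m i b = 0" by (auto simp: grouplike_comod_def)
  then show ?thesis by simp
next
  case True
  let ?S = "\<Union>m<n. {c. r a m c \<noteq> 0}"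
  have fin: "finite ?S" using g by (auto simp: grouplike_comod_def)
  have "(\<Sum>m<n. comod_act r f a m * r m i b) = (\<Sum>c\<in>?S. f c * (\<Sum>m<n. r a m c * r m i b))"
    unfolding comod_act_def by (rule sum_restrict_swap[OF fin]) auto
  also have "\<dots> = (\<Sum>c\<in>?S. f c * (if b = c \<and> b \<in> B then r a i b else 0))"
    using g a True by (simp add: grouplike_comod_def)
  also have "\<dots> = (if b \<in> ?S then f b * (if b = b \<and> b \<in> B then r a i b else 0) else 0)"
    by (rule sum_eq_single[OF fin]) auto
  also have "\<dots> = (if b \<in> B then f b * r a i b else 0)"
    using True by auto
  finally show ?thesis .
qed

lemma grouplike_comod_rows_in_free_mod:
  assumes g: "grouplike_comod B n r" and B: "B \<subseteq> cbasis C"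
  shows "(\<lambda>z. r a (fst z) (snd z)) \<in> free_mod (C :: ('b, 'k::field) coalg) {..<n}"
proof -
  have supp: "\<forall>a m c. r a m c \<noteq> 0 \<longrightarrow> a < n \<and> m < n \<and> c \<in> B" using g by (simp add: grouplike_comod_def)
  then have "finite {i. \<exists>b. r a i b \<noteq> 0}" by (auto intro: finite_subset[of _ "{..<n}"])
  with supp B show ?thesis by (auto simp: free_mod_def)
qed

section \<open>Quivers without arrows\<close>

lemma is_path_no_arrows: "is_path V {} s t p \<longleftrightarrow> fst p \<in> V \<and> snd p = []"
  by (auto simp: is_path_def)

lemma comul_no_arrows:
  "comul (path_coalg V {} s t) y pq = (if fst y \<in> V \<and> snd y = [] \<and> pq = (y, y) then 1 else 0)"
  by (cases y; cases pq) (auto simp: comul_path_coalg is_path_no_arrows path_end_def)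

lemma dual_mult_no_arrows:
  "dual_mult (path_coalg V {} s t) f g y = (if fst y \<in> V \<and> snd y = [] then f y * g y else (0::'k::field))"
proof -
  have "csupp (comul (path_coalg V {} s t) y :: _ \<Rightarrow> 'k) = (if fst y \<in> V \<and> snd y = [] then {(y, y)} else {})"
    by (auto simp: csupp_def comul_no_arrows)
  then show ?thesis by (simp add: dual_mult_def is_path_no_arrows comul_no_arrows)
qed

lemma lhit_no_arrows:
  "lhit (path_coalg V {} s t) f b = (\<lambda>p. if fst b \<in> V \<and> snd b = [] \<and> p = b then f b else (0::'k::field))"
proof
  fix p
  have "{q. comul (path_coalg V {} s t) b (p, q) \<noteq> (0::'k)} = (if fst b \<in> V \<and> snd b = [] \<and> p = b then {b} else {})"
    by (auto simp: comul_no_arrows)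
  then show "lhit (path_coalg V {} s t) f b p = (if fst b \<in> V \<and> snd b = [] \<and> p = b then f b else 0)"
    by (simp add: lhit_def comul_no_arrows)
qed

lemma rhit_no_arrows:
  "rhit (path_coalg V {} s t) b f = (\<lambda>p. if fst b \<in> V \<and> snd b = [] \<and> p = b then f b else (0::'k::field))"
proof
  fix p
  have "{q. comul (path_coalg V {} s t) b (q, p) \<noteq> (0::'k)} = (if fst b \<in> V \<and> snd b = [] \<and> p = b then {b} else {})"
    by (auto simp: comul_no_arrows)
  then show "rhit (path_coalg V {} s t) b f p = (if fst b \<in> V \<and> snd b = [] \<and> p = b then f b else 0)"
    by (simp add: rhit_def comul_no_arrows)
qed

lemma finite_csupp_lhit_no_arrows: "finite (csupp (lhit (path_coalg V {} s t) f b :: _ \<Rightarrow> 'k::field))"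
  by (rule finite_subset[of _ "{b}"]) (auto simp: csupp_def lhit_no_arrows)

lemma finite_csupp_rhit_no_arrows: "finite (csupp (rhit (path_coalg V {} s t) b f :: _ \<Rightarrow> 'k::field))"
  by (rule finite_subset[of _ "{b}"]) (auto simp: csupp_def rhit_no_arrows)

lemma coFrobenius_no_arrows: "coFrobenius (path_coalg V {} s t :: (_, 'k::field) coalg)"
  unfolding coFrobenius_def
proof (intro exI[of _ delta] conjI ballI impI)
  let ?C = "path_coalg V {} s t :: (_, 'k) coalg"
  fix b assume "b \<in> cbasis ?C"
  then show "delta b \<in> dual_elems ?C" by (rule delta_in_dual_elems)
next
  let ?C = "path_coalg V {} s t :: (_, 'k) coalg"
  fix x assume "x \<in> celems ?C" "lin_ext delta x = (\<lambda>_. 0 :: 'k)"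
  then show "x = (\<lambda>_. 0)" using lin_ext_delta_id[of x] by (simp add: celems_def)
next
  let ?C = "path_coalg V {} s t :: (_, 'k) coalg"
  fix f b assume "b \<in> cbasis ?C"
  then have b: "fst b \<in> V" "snd b = []" by (simp_all add: is_path_no_arrows)
  have "lin_ext delta (lhit ?C f b) = lhit ?C f b"
    by (rule lin_ext_delta_id[OF finite_csupp_lhit_no_arrows])
  also have "\<dots> = dual_mult ?C f (delta b)"
    using b by (intro ext) (simp add: lhit_no_arrows dual_mult_no_arrows)
  finally show "lin_ext delta (lhit ?C f b) = dual_mult ?C f (delta b)" .
qed

lemma left_qcF_no_arrows: "left_qcF (path_coalg V {} s t :: (_, 'k::field) coalg)"
  unfolding left_qcF_def
proof (intro exI[of _ UNIV] exI[of _ "\<lambda>b (i, z). if i = undefined \<and> z = b then 1 else 0"] conjI ballI impI)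
  let ?C = "path_coalg V {} s t :: (_, 'k) coalg"
  fix b assume "b \<in> cbasis ?C"
  then show "(\<lambda>(i, z). if i = undefined \<and> z = b then 1 else 0) \<in> free_mod ?C UNIV"
    by (rule component_in_free_mod)
next
  let ?C = "path_coalg V {} s t :: (_, 'k) coalg"
  fix x assume "x \<in> celems ?C" "lin_ext (\<lambda>b (i, z). if i = undefined \<and> z = b then 1 else 0) x = (\<lambda>_. 0 :: 'k)"
  then show "x = (\<lambda>_. 0)" using lin_ext_component_inj[of x] by (simp add: celems_def)
next
  let ?C = "path_coalg V {} s t :: (_, 'k) coalg"
  fix f b assume "b \<in> cbasis ?C"
  then have b: "fst b \<in> V" "snd b = []" by (simp_all add: is_path_no_arrows)
  show "lin_ext (\<lambda>b (i, z). if i = undefined \<and> z = b then 1 else 0) (lhit ?C f b) =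
        free_lact ?C f (\<lambda>(i, z). if i = undefined \<and> z = b then 1 else 0)"
    unfolding lin_ext_component[OF finite_csupp_lhit_no_arrows]
    using b by (intro ext) (auto simp: lhit_no_arrows dual_mult_no_arrows free_lact_def)
qed

lemma right_qcF_no_arrows: "right_qcF (path_coalg V {} s t :: (_, 'k::field) coalg)"
  unfolding right_qcF_def
proof (intro exI[of _ UNIV] exI[of _ "\<lambda>b (i, z). if i = undefined \<and> z = b then 1 else 0"] conjI ballI impI)
  let ?C = "path_coalg V {} s t :: (_, 'k) coalg"
  fix b assume "b \<in> cbasis ?C"
  then show "(\<lambda>(i, z). if i = undefined \<and> z = b then 1 else 0) \<in> free_mod ?C UNIV"
    by (rule component_in_free_mod)
next
  let ?C = "path_coalg V {} s t :: (_, 'k) coalg"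
  fix x assume "x \<in> celems ?C" "lin_ext (\<lambda>b (i, z). if i = undefined \<and> z = b then 1 else 0) x = (\<lambda>_. 0 :: 'k)"
  then show "x = (\<lambda>_. 0)" using lin_ext_component_inj[of x] by (simp add: celems_def)
next
  let ?C = "path_coalg V {} s t :: (_, 'k) coalg"
  fix f b assume "b \<in> cbasis ?C"
  then have b: "fst b \<in> V" "snd b = []" by (simp_all add: is_path_no_arrows)
  show "lin_ext (\<lambda>b (i, z). if i = undefined \<and> z = b then 1 else 0) (rhit ?C b f) =
        free_ract ?C (\<lambda>(i, z). if i = undefined \<and> z = b then 1 else 0) f"
    unfolding lin_ext_component[OF finite_csupp_rhit_no_arrows]
    using b by (intro ext) (auto simp: rhit_no_arrows dual_mult_no_arrows free_ract_def)
qed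

lemma coassoc_no_arrows:
  assumes fin: "finite {c. r a i c \<noteq> 0}"
  shows "(\<Sum>c'\<in>{c. r a i c \<noteq> 0}. r a i c' * comul (path_coalg V {} s t) c' (b, c)) =
         (if b = c \<and> b \<in> {p. fst p \<in> V \<and> snd p = []} then r a i b else (0::'k::field))"
proof -
  have "(\<Sum>c'\<in>{c. r a i c \<noteq> 0}. r a i c' * comul (path_coalg V {} s t) c' (b, c)) =
        (if b \<in> {c. r a i c \<noteq> 0} then r a i b * comul (path_coalg V {} s t) b (b, c) else 0)"
    using fin by (intro sum_eq_single) (auto simp: comul_no_arrows)
  then show ?thesis by (auto simp: comul_no_arrows)
qed

lemma right_comod_no_arrows:
  assumes rc: "right_comod (path_coalg V {} s t) n r"
  shows "grouplike_comod {p. fst p \<in> V \<and> snd p = []} n (r :: _ \<Rightarrow> _ \<Rightarrow> _ \<Rightarrow> 'k::field)"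
proof -
  let ?B = "{p. fst p \<in> V \<and> snd p = []}"
  have supp: "\<forall>a m c. r a m c \<noteq> 0 \<longrightarrow> a < n \<and> m < n \<and> c \<in> ?B"
    using rc unfolding right_comod_def by (simp add: is_path_no_arrows)
  have fin: "\<forall>a m. finite {c. r a m c \<noteq> 0}"
    using rc by (simp add: right_comod_def)
  have coassoc: "\<forall>a<n. \<forall>i<n. \<forall>b c. (\<Sum>m<n. r a m c * r m i b) = (if b = c \<and> b \<in> ?B then r a i b else 0)"
  proof (intro allI impI)
    fix a i b c assume "a < n" "i < n"
    then have "(\<Sum>m<n. r a m c * r m i b) = (\<Sum>c'\<in>{c. r a i c \<noteq> 0}. r a i c' * comul (path_coalg V {} s t) c' (b, c))"
      using rc unfolding right_comod_def by blast
    also have "\<dots> = (if b = c \<and> b \<in> ?B then r a i b else 0)"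
      using fin by (intro coassoc_no_arrows) blast
    finally show "(\<Sum>m<n. r a m c * r m i b) = (if b = c \<and> b \<in> ?B then r a i b else 0)" .
  qed
  have counit: "\<forall>a<n. \<forall>m<n. (\<Sum>c\<in>{c. r a m c \<noteq> 0}. r a m c * (if c \<in> ?B then 1 else 0)) = (if a = m then 1 else 0)"
    using rc unfolding right_comod_def by (simp add: is_path_no_arrows conj_ac)
  show ?thesis unfolding grouplike_comod_def using supp fin coassoc counit by (intro conjI)
qed

lemma left_comod_no_arrows:
  assumes lc: "left_comod (path_coalg V {} s t) n r"
  shows "grouplike_comod {p. fst p \<in> V \<and> snd p = []} n (r :: _ \<Rightarrow> _ \<Rightarrow> _ \<Rightarrow> 'k::field)"
proof -
  let ?B = "{p. fst p \<in> V \<and> snd p = []}"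
  have supp: "\<forall>a m c. r a m c \<noteq> 0 \<longrightarrow> a < n \<and> m < n \<and> c \<in> ?B"
    using lc unfolding left_comod_def by (simp add: is_path_no_arrows)
  have fin: "\<forall>a m. finite {c. r a m c \<noteq> 0}"
    using lc by (simp add: left_comod_def)
  have coassoc: "\<forall>a<n. \<forall>i<n. \<forall>b c. (\<Sum>m<n. r a m c * r m i b) = (if b = c \<and> b \<in> ?B then r a i b else 0)"
  proof (intro allI impI)
    fix a i b c assume "a < n" "i < n"
    then have "(\<Sum>m<n. r a m c * r m i b) = (\<Sum>c'\<in>{c. r a i c \<noteq> 0}. r a i c' * comul (path_coalg V {} s t) c' (c, b))"
      using lc unfolding left_comod_def by (blast intro: sym)
    also have "\<dots> = (if c = b \<and> c \<in> ?B then r a i c else 0)"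
      using fin by (intro coassoc_no_arrows) blast
    finally show "(\<Sum>m<n. r a m c * r m i b) = (if b = c \<and> b \<in> ?B then r a i b else 0)" by auto
  qed
  have counit: "\<forall>a<n. \<forall>m<n. (\<Sum>c\<in>{c. r a m c \<noteq> 0}. r a m c * (if c \<in> ?B then 1 else 0)) = (if a = m then 1 else 0)"
    using lc unfolding left_comod_def by (simp add: is_path_no_arrows conj_ac mult.commute)
  show ?thesis unfolding grouplike_comod_def using supp fin coassoc counit by (intro conjI)
qed

lemma left_fqcF_no_arrows: "left_fqcF (path_coalg V {} s t :: ('v \<times> 'e list, 'k::field) coalg)"
  unfolding left_fqcF_def
proof (intro allI impI)
  let ?C = "path_coalg V {} s t :: ('v \<times> 'e list, 'k) coalg"
  fix n r assume "right_comod ?C n r"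
  then have g: "grouplike_comod {p. fst p \<in> V \<and> snd p = []} n r" by (rule right_comod_no_arrows)
  show "\<exists>(I :: nat set) (\<phi> :: nat \<Rightarrow> nat \<times> 'v \<times> 'e list \<Rightarrow> 'k). (\<forall>a<n. \<phi> a \<in> free_mod ?C I) \<and>
        (\<forall>x. (\<forall>m. x m \<noteq> 0 \<longrightarrow> m < n) \<longrightarrow> (\<lambda>z. \<Sum>a<n. x a * \<phi> a z) = (\<lambda>_. 0) \<longrightarrow> x = (\<lambda>_. 0)) \<and>
        (\<forall>f\<in>dual_elems ?C. \<forall>a<n. (\<lambda>z. \<Sum>m<n. comod_act r f a m * \<phi> m z) = free_lact ?C f (\<phi> a))"
  proof (intro exI[of _ "{..<n}"] exI[of _ "\<lambda>a z. r a (fst z) (snd z)"] conjI ballI allI impI)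
    show "(\<lambda>z. r a (fst z) (snd z)) \<in> free_mod ?C {..<n}" for a
      using g by (rule grouplike_comod_rows_in_free_mod) (auto simp: is_path_no_arrows)
    show "x = (\<lambda>_. 0)" if "\<forall>m. x m \<noteq> 0 \<longrightarrow> m < n" "(\<lambda>z. \<Sum>a<n. x a * r a (fst z) (snd z)) = (\<lambda>_. 0)" for x
      using g that by (rule grouplike_comod_rows_injective)
    show "(\<lambda>z. \<Sum>m<n. comod_act r f a m * r m (fst z) (snd z)) = free_lact ?C f (\<lambda>z. r a (fst z) (snd z))"
      if "a < n" for f a
      using grouplike_comod_rows_equivariant[OF g that]
      by (auto simp: free_lact_def dual_mult_no_arrows)
  qed
qed

lemma right_fqcF_no_arrows: "right_fqcF (path_coalg V {} s t :: ('v \<times> 'e list, 'k::field) coalg)"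
  unfolding right_fqcF_def
proof (intro allI impI)
  let ?C = "path_coalg V {} s t :: ('v \<times> 'e list, 'k) coalg"
  fix n r assume "left_comod ?C n r"
  then have g: "grouplike_comod {p. fst p \<in> V \<and> snd p = []} n r" by (rule left_comod_no_arrows)
  show "\<exists>(I :: nat set) (\<phi> :: nat \<Rightarrow> nat \<times> 'v \<times> 'e list \<Rightarrow> 'k). (\<forall>a<n. \<phi> a \<in> free_mod ?C I) \<and>
        (\<forall>x. (\<forall>m. x m \<noteq> 0 \<longrightarrow> m < n) \<longrightarrow> (\<lambda>z. \<Sum>a<n. x a * \<phi> a z) = (\<lambda>_. 0) \<longrightarrow> x = (\<lambda>_. 0)) \<and>
        (\<forall>f\<in>dual_elems ?C. \<forall>a<n. (\<lambda>z. \<Sum>m<n. comod_act r f a m * \<phi> m z) = free_ract ?C (\<phi> a) f)"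
  proof (intro exI[of _ "{..<n}"] exI[of _ "\<lambda>a z. r a (fst z) (snd z)"] conjI ballI allI impI)
    show "(\<lambda>z. r a (fst z) (snd z)) \<in> free_mod ?C {..<n}" for a
      using g by (rule grouplike_comod_rows_in_free_mod) (auto simp: is_path_no_arrows)
    show "x = (\<lambda>_. 0)" if "\<forall>m. x m \<noteq> 0 \<longrightarrow> m < n" "(\<lambda>z. \<Sum>a<n. x a * r a (fst z) (snd z)) = (\<lambda>_. 0)" for x
      using g that by (rule grouplike_comod_rows_injective)
    show "(\<lambda>z. \<Sum>m<n. comod_act r f a m * r m (fst z) (snd z)) = free_ract ?C (\<lambda>z. r a (fst z) (snd z)) f"
      if "a < n" for f a
      using grouplike_comod_rows_equivariant[OF g that]
      by (auto simp: free_ract_def dual_mult_no_arrows mult.commute)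
  qed
qed

lemma cosemisimple_no_arrows: "cosemisimple (path_coalg V {} s t :: ('v \<times> 'e list, 'k::field) coalg)"
proof -
  let ?C = "path_coalg V {} s t :: ('v \<times> 'e list, 'k) coalg"
  let ?\<D> = "vertex_line ` V :: ('v \<times> 'e list \<Rightarrow> 'k) set set"
  have simple: "\<forall>D\<in>?\<D>. simple_subcoalgebra ?C D"
    by (auto intro: simple_subcoalgebra_vertex_line)
  have "fspan (\<Union>?\<D>) \<subseteq> celems ?C"
    using simple by (intro fspan_subset_celems) (auto simp: simple_subcoalgebra_def subcoalgebra_def)
  moreover have "celems ?C \<subseteq> fspan (\<Union>?\<D>)"
  proof
    fix x assume x: "x \<in> celems ?C"
    then have fin: "finite (csupp x)" and basis: "\<forall>b\<in>csupp x. fst b \<in> V \<and> snd b = []"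
      by (auto simp: celems_def is_path_no_arrows)
    have "x = (\<lambda>z. \<Sum>b\<in>csupp x. x b * delta b z)"
      using lin_ext_delta_id[OF fin] by (simp add: lin_ext_def)
    also have "\<dots> \<in> fspan (\<Union>?\<D>)"
    proof (rule lincomb_in_fspan[OF fin], rule ballI)
      fix b assume "b \<in> csupp x"
      then have "b = (fst b, [])" "fst b \<in> V" using basis by (auto simp: prod_eq_iff)
      moreover have "delta (fst b, []) \<in> (vertex_line (fst b) :: ('v \<times> 'e list \<Rightarrow> 'k) set)"
        by (rule delta_in_vertex_line)
      ultimately show "delta b \<in> \<Union>?\<D>" by (metis UN_I)
    qed
    finally show "x \<in> fspan (\<Union>?\<D>)" .
  qed
  ultimately have span: "fspan (\<Union>?\<D>) = celems ?C" ..
  have direct: "D \<inter> fspan (\<Union>(?\<D> - {D})) = {\<lambda>_. 0}" if "D \<in> ?\<D>" for D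
  proof
    obtain v where D: "D = vertex_line v" using \<open>D \<in> ?\<D>\<close> by blast
    have "(\<lambda>_. 0) \<in> D" unfolding D by (rule zero_in_span_closed[OF fspan_vertex_line])
    moreover have "(\<lambda>_. 0) \<in> fspan (\<Union>(?\<D> - {D}))"
      using lincomb_in_fspan[of "{}" "\<lambda>x. x" "\<Union>(?\<D> - {D})" "\<lambda>_. 0"] by simp
    ultimately show "{\<lambda>_. 0} \<subseteq> D \<inter> fspan (\<Union>(?\<D> - {D}))" by simp
    show "D \<inter> fspan (\<Union>(?\<D> - {D})) \<subseteq> {\<lambda>_. 0}"
    proof
      fix y assume y: "y \<in> D \<inter> fspan (\<Union>(?\<D> - {D}))"
      then obtain F c where F: "F \<subseteq> \<Union>(?\<D> - {D})" and y_eq: "y = (\<lambda>z. \<Sum>u\<in>F. c u * u z)"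
        unfolding fspan_def by blast
      have "u (v, []) = 0" if "u \<in> F" for u
      proof -
        obtain w where "u \<in> vertex_line w" "vertex_line w \<noteq> D" using F \<open>u \<in> F\<close> by blast
        then show ?thesis using D by (auto intro: vertex_line_vanishes)
      qed
      then have "y (v, []) = 0" unfolding y_eq by (simp add: sum.neutral)
      moreover obtain k where "y = (\<lambda>a. k * delta (v, []) a)" using y D by (auto simp: vertex_line_def)
      ultimately show "y \<in> {\<lambda>_. 0}" by simp
    qed
  qed
  show ?thesis unfolding cosemisimple_def by (intro exI[of _ ?\<D>] conjI simple span ballI direct)
qed

theorem corollary4p15:
  fixes V :: "'v set" and E :: "'e set" and s t :: "'e \<Rightarrow> 'v"
    and C :: "('v \<times> 'e list, 'k::field) coalg"
  assumes "quiver V E s t"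
    and "C = path_coalg V E s t"
  shows "(left_fqcF C \<longleftrightarrow> right_fqcF C) \<and>
         (right_fqcF C \<longleftrightarrow> left_qcF C) \<and>
         (left_qcF C \<longleftrightarrow> right_qcF C) \<and>
         (right_qcF C \<longleftrightarrow> coFrobenius C) \<and>
         (coFrobenius C \<longleftrightarrow> cosemisimple C) \<and>
         (cosemisimple C \<longleftrightarrow> E = {})"
proof (cases "E = {}")
  case True
  then show ?thesis
    by (simp add: assms(2) left_fqcF_no_arrows right_fqcF_no_arrows left_qcF_no_arrows
        right_qcF_no_arrows coFrobenius_no_arrows cosemisimple_no_arrows)
next
  case False
  then obtain e where e: "e \<in> E" by blast
  show ?thesis
    using False
    by (simp add: assms(2) not_left_fqcF_path_coalg[OF assms(1) e] not_right_fqcF_path_coalg[OF assms(1) e]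
        not_left_qcF_path_coalg[OF assms(1) e] not_right_qcF_path_coalg[OF assms(1) e]
        not_coFrobenius_path_coalg[OF assms(1) e] not_cosemisimple_path_coalg[OF assms(1) e])
qed

end
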